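(* Let $-1<r<1$ and $\nu=3$ (sample size $n=4$). The posterior density of the scale-invariant slope under the Cauchy prior, $$p(\tilde\beta\mid y)=\frac{p_C(\tilde\beta)J(\tilde\beta,3,r,1)}{\int_{-\infty}^\infty p_C(x)J(x,3,r,1)\,dx},\qquad p_C(x)=\frac1\pi\frac1{1+x^2},$$ equals $$p(\tilde\beta\mid y)=K(r)\,\frac{1}{1+\tilde\beta^2}\cdot\frac{|\tilde\beta|}{\tilde\beta^2-2r\tilde\beta+1},\qquad K(r)={}_2F_1(1,1;\tfrac32;r^2)^{-1}=\frac{r\sqrt{1-r^2}}{\arcsin r}\ (r\ne0),\quad K(0)=1.$$
   Context: Functions: $p_t(t;\nu)$ Student $t$ density; $P_F(x;\nu_1,\nu_2)$ $F$ distribution function; for $\nu>1$, $-1<r<1$, $\tilde\beta>0$: $t_-(\nu,r)=-\sqrt{\nu}\,r/\sqrt{1-r^2}$, $t_+(\tilde\beta,\nu,r)=\sqrt{\nu}(\tilde\beta-r)/\sqrt{1-r^2}$, $F(t,\tilde\beta,\nu,r)=\frac{\nu-1}{\nu+1}\frac{\nu+t^2}{[t_+-t_-]^2-[t-t_-]^2}$, $I(\tilde\beta,\nu,r)=\int_{t_-}^{t_+}p_t(t;\nu)P_F(F(t,\tilde\beta,\nu,r);\nu+1,\nu-1)\,dt$, and for $\beta\ne0$, $l>0$: $J(\beta,\nu,r,l)=I(|\beta|/l,\nu,r\,\mathrm{sign}\beta)+I(l/|\beta|,\nu,r\,\mathrm{sign}\beta)$. ${}_2F_1$ is the Gauss hypergeometric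 function. The posterior of $\beta$ is $p(\tilde\beta\mid y)/l$ with $\tilde\beta=\beta/l$. *)

theory Defs
  imports "HOL-Analysis.Analysis"
begin

definition student_t_density :: "real \<Rightarrow> real \<Rightarrow> real" where
  "student_t_density \<nu> t =
     Gamma ((\<nu> + 1) / 2) / (sqrt (\<nu> * pi) * Gamma (\<nu> / 2))
     * (1 + t\<^sup>2 / \<nu>) powr (- (\<nu> + 1) / 2)"

definition F_density :: "real \<Rightarrow> real \<Rightarrow> real \<Rightarrow> real" where
  "F_density d1 d2 s =
     Gamma ((d1 + d2) / 2) / (Gamma (d1 / 2) * Gamma (d2 / 2))
     * (d1 / d2) powr (d1 / 2) * s powr (d1 / 2 - 1)
     * (1 + d1 * s / d2) powr (- (d1 + d2) / 2)"

definition F_cdf :: "real \<Rightarrow> real \<Rightarrow> real \<Rightarrow> real" where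
  "F_cdf d1 d2 x = (if x \<le> 0 then 0 else (LBINT s:{0..x}. F_density d1 d2 s))"

definition t_minus :: "real \<Rightarrow> real \<Rightarrow> real" where
  "t_minus \<nu> r = - sqrt \<nu> * r / sqrt (1 - r\<^sup>2)"

definition t_plus :: "real \<Rightarrow> real \<Rightarrow> real \<Rightarrow> real" where
  "t_plus b \<nu> r = sqrt \<nu> * (b - r) / sqrt (1 - r\<^sup>2)"

definition Fstat :: "real \<Rightarrow> real \<Rightarrow> real \<Rightarrow> real \<Rightarrow> real" where
  "Fstat t b \<nu> r = (\<nu> - 1) / (\<nu> + 1) * (\<nu> + t\<^sup>2)
     / ((t_plus b \<nu> r - t_minus \<nu> r)\<^sup>2 - (t - t_minus \<nu> r)\<^sup>2)"

definition Ifun :: "real \<Rightarrow> real \<Rightarrow> real \<Rightarrow> real" where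
  "Ifun b \<nu> r = (LBINT t:{t_minus \<nu> r .. t_plus b \<nu> r}.
      student_t_density \<nu> t * F_cdf (\<nu> + 1) (\<nu> - 1) (Fstat t b \<nu> r))"

definition Jfun :: "real \<Rightarrow> real \<Rightarrow> real \<Rightarrow> real \<Rightarrow> real" where
  "Jfun \<beta> \<nu> r l = Ifun (\<bar>\<beta>\<bar> / l) \<nu> (r * sgn \<beta>) + Ifun (l / \<bar>\<beta>\<bar>) \<nu> (r * sgn \<beta>)"

definition cauchy_density :: "real \<Rightarrow> real" where
  "cauchy_density x = 1 / pi * (1 / (1 + x\<^sup>2))"

definition posterior_cauchy :: "real \<Rightarrow> real \<Rightarrow> real \<Rightarrow> real" where
  "posterior_cauchy \<nu> r b =
     cauchy_density b * Jfun b \<nu> r 1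
     / (LINT x|lborel. cauchy_density x * Jfun x \<nu> r 1)"

definition hyp2F1 :: "real \<Rightarrow> real \<Rightarrow> real \<Rightarrow> real \<Rightarrow> real" where
  "hyp2F1 a b c z = (\<Sum>n. pochhammer a n * pochhammer b n / (pochhammer c n * fact n) * z ^ n)"

definition Kconst :: "real \<Rightarrow> real" where
  "Kconst r = (if r = 0 then 1 else r * sqrt (1 - r\<^sup>2) / arcsin r)"

end

theory Submission
  imports Defs "HOL-Real_Asymp.Real_Asymp"
begin

(* For nu = 3 every ingredient of the posterior has a closed form.  The Student t density
   is 18 / (pi sqrt 3 (3 + t^2)^2) and the F(4,2) distribution function is
   (2x / (1 + 2x))^2, so the integrand of I(b,3,r) collapses to c / (A - B t)^2 with
   A - B t an affine function positive on [t_-, t_+]; integrating gives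
     I(b,3,r) = k(r) * b / ((1 + b^2) (b^2 - 2 r b + 1)),   k(r) = 2/pi (1 - r^2)^(3/2),
   and the two terms of J(b,3,r,1) add up to k(r) |b| / (b^2 - 2 r b + 1).
   Hence the unnormalised posterior is proportional to |b| / ((1 + b^2)(b^2 - 2 r b + 1)).
   Its integral over the real line is computed with an explicit arctan antiderivative
   and equals arcsin r / (r sqrt (1 - r^2)) (resp. 1 for r = 0).  Finally this value is
   identified with 2F1(1,1;3/2;r^2): the series satisfies a first-order linear ODE, which
   shows that x sqrt (1 - x^2) 2F1(1,1;3/2;x^2) has the same derivative as arcsin x. *)

section \<open>Closed forms of the densities for three degrees of freedom\<close>

lemma F_density_4_2:
  assumes "s \<ge> 0"
  shows "F_density 4 2 s = 8 * s / (1 + 2 * s) ^ 3"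
proof -
  have "Gamma (3::real) = 2" and "Gamma (2::real) = 1" by (simp_all add: Gamma_numeral)
  moreover have "(1 + 2 * s) powr (-3) = 1 / (1 + 2 * s) ^ 3"
    using assms by (simp add: powr_minus divide_inverse)
  ultimately show ?thesis unfolding F_density_def using assms by simp
qed

lemma F_cdf_4_2:
  assumes "x > 0"
  shows "F_cdf 4 2 x = (2 * x / (1 + 2 * x))\<^sup>2"
proof -
  have "F_cdf 4 2 x = (LBINT s:{0..x}. 8 * s / (1 + 2 * s) ^ 3)"
    unfolding F_cdf_def using assms
    by (auto intro!: set_lebesgue_integral_cong simp: F_density_4_2)
  also have "\<dots> = (2 * x / (1 + 2 * x))\<^sup>2 - (2 * 0 / (1 + 2 * 0))\<^sup>2"
    unfolding set_lebesgue_integral_def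
  proof (rule integral_FTC_atLeastAtMost)
    fix y :: real assume "0 \<le> y"
    then have nz: "1 + 2 * y \<noteq> 0" by simp
    have "((\<lambda>y. (2 * y / (1 + 2 * y))\<^sup>2) has_real_derivative
        of_nat 2 * (2 * y / (1 + 2 * y)) ^ (2 - 1) * ((2 * (1 + 2 * y) - 2 * y * 2) / (1 + 2 * y)\<^sup>2)) (at y)"
      using nz by (intro derivative_eq_intros DERIV_divide DERIV_power) (auto simp: power2_eq_square)
    also have "of_nat 2 * (2 * y / (1 + 2 * y)) ^ (2 - 1) * ((2 * (1 + 2 * y) - 2 * y * 2) / (1 + 2 * y)\<^sup>2)
        = 8 * y / (1 + 2 * y) ^ 3"
      using nz by (simp add: field_simps power2_eq_square power3_eq_cube)
    finally show "((\<lambda>y. (2 * y / (1 + 2 * y))\<^sup>2) has_vector_derivative 8 * y / (1 + 2 * y) ^ 3)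
        (at y within {0..x})"
      by (simp add: has_real_derivative_iff_has_vector_derivative has_vector_derivative_at_within)
  qed (use assms in \<open>auto intro!: continuous_intros\<close>)
  finally show ?thesis by simp
qed

lemma student_t_density_3: "student_t_density 3 t = 18 / (pi * sqrt 3 * (3 + t\<^sup>2)\<^sup>2)"
proof -
  have "(1/2::real) \<notin> \<int>\<^sub>\<le>\<^sub>0" by (auto elim!: nonpos_Ints_cases)
  from Gamma_plus1[OF this] have Gamma_3_2: "Gamma (3/2::real) = sqrt pi / 2"
    by (simp add: Gamma_one_half_real)
  have "Gamma (2::real) = 1" by (simp add: Gamma_numeral)
  moreover have "(1 + t\<^sup>2 / 3) powr (- (3 + 1) / 2) = 9 / (3 + t\<^sup>2)\<^sup>2"
    by (simp add: powr_minus field_simps power2_eq_square)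
  moreover have "sqrt (3 * pi) = sqrt 3 * sqrt pi" by (simp add: real_sqrt_mult)
  moreover have "sqrt pi * (sqrt pi * x) = pi * x" for x by (simp add: mult.assoc[symmetric])
  ultimately show ?thesis unfolding student_t_density_def Gamma_3_2 by (simp add: field_simps)
qed

lemma student_t_3_times_F_cdf:
  assumes "d > 0"
  shows "student_t_density 3 t * F_cdf 4 2 ((3 + t\<^sup>2) / (2 * d))
    = 18 / (pi * sqrt 3) / (d + (3 + t\<^sup>2))\<^sup>2"
proof -
  define X where "X = 3 + t\<^sup>2"
  have X: "X > 0" unfolding X_def by (simp add: add_pos_nonneg)
  have "2 * (X / (2 * d)) / (1 + 2 * (X / (2 * d))) = X / (d + X)"
    using assms X by (simp add: field_simps)
  then have "F_cdf 4 2 (X / (2 * d)) = (X / (d + X))\<^sup>2"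
    using F_cdf_4_2[of "X / (2 * d)"] assms X by simp
  then show ?thesis unfolding student_t_density_3 X_def[symmetric] using assms X
    by (simp add: field_simps power2_eq_square)
qed

section \<open>The function \<open>I(b,3,r)\<close>\<close>

lemma integral_inverse_square_affine:
  fixes A B a b c :: real
  assumes "a \<le> b" and pos: "\<And>t. a \<le> t \<Longrightarrow> t \<le> b \<Longrightarrow> A - B * t > 0"
  shows "set_integrable lborel {a..b} (\<lambda>t. c / (A - B * t)\<^sup>2)"
    and "(LBINT t:{a..b}. c / (A - B * t)\<^sup>2) = c * (b - a) / ((A - B * a) * (A - B * b))"
proof -
  have cont: "continuous_on {a..b} (\<lambda>t. c / (A - B * t)\<^sup>2)"
    using pos by (intro continuous_intros) (auto simp: less_le)
  then show "set_integrable lborel {a..b} (\<lambda>t. c / (A - B * t)\<^sup>2)"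
    by (rule borel_integrable_atLeastAtMost')
  have Aa: "A - B * a > 0" using pos[of a] assms(1) by simp
  define G where "G t = c / (A - B * a) * ((t - a) / (A - B * t))" for t
  have "(LBINT t:{a..b}. c / (A - B * t)\<^sup>2) = G b - G a"
    unfolding set_lebesgue_integral_def
  proof (rule integral_FTC_atLeastAtMost[OF assms(1) _ cont])
    fix t assume "a \<le> t" "t \<le> b"
    then have "A - B * t > 0" using pos by simp
    then have "((\<lambda>t. (t - a) / (A - B * t)) has_real_derivative (A - B * a) / (A - B * t)\<^sup>2) (at t)"
      by (auto intro!: derivative_eq_intros simp: power2_eq_square algebra_simps)
    from DERIV_cmult[OF this, of "c / (A - B * a)"]
    have "(G has_real_derivative c / (A - B * t)\<^sup>2) (at t)"
      unfolding G_def[abs_def] using Aa by simp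
    then show "(G has_vector_derivative c / (A - B * t)\<^sup>2) (at t within {a..b})"
      by (simp add: has_real_derivative_iff_has_vector_derivative has_vector_derivative_at_within)
  qed
  also have "\<dots> = c * (b - a) / ((A - B * a) * (A - B * b))"
    unfolding G_def by simp
  finally show "(LBINT t:{a..b}. c / (A - B * t)\<^sup>2) = c * (b - a) / ((A - B * a) * (A - B * b))" .
qed

text \<open>Changing an integrand at the right end point does not change its integral.  This
  avoids any measurability argument for the integrand of \<open>I\<close>, which is only known
  pointwise.\<close>

lemma set_integral_cong_except_right_end:
  fixes f g :: "real \<Rightarrow> real"
  assumes "a \<le> b" and g: "set_integrable lborel {a..b} g"
    and eq: "\<And>t. a \<le> t \<Longrightarrow> t < b \<Longrightarrow> f t = g t"
  shows "(LBINT t:{a..b}. f t) = (LBINT t:{a..b}. g t)"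
proof -
  have split: "indicator {a..b} t *\<^sub>R f t
      = indicator {a..b} t *\<^sub>R g t - indicator {b} t *\<^sub>R (g b - f b)" for t
    using assms(1) eq[of t] by (cases "t = b") (auto simp: indicator_def)
  have "(LINT t|lborel. indicator {b} t *\<^sub>R (g b - f b)) = 0"
    by (rule integral_eq_zero_AE) (use AE_lborel_singleton[of b] in \<open>auto elim!: eventually_mono\<close>)
  moreover have "integrable lborel (\<lambda>t. indicator {b} t *\<^sub>R (g b - f b))"
    by (intro integrable_scaleR_left integrable_real_indicator) auto
  ultimately show ?thesis
    using g unfolding set_lebesgue_integral_def set_integrable_def split by simp
qed

lemma quadratic_pos:
  fixes r b :: real
  assumes "-1 < r" "r < 1"
  shows "b\<^sup>2 - 2 * r * b + 1 > 0"
proof -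
  have "r\<^sup>2 < 1" using assms by (simp add: abs_square_less_1)
  moreover have "b\<^sup>2 - 2 * r * b + 1 = (b - r)\<^sup>2 + (1 - r\<^sup>2)" by (simp add: power2_eq_square algebra_simps)
  ultimately show ?thesis by (smt (verit) zero_le_power2)
qed

text \<open>Closed form of \<open>I(b,3,r)\<close>: the denominator of the F-statistic plus \<open>3 + t\<^sup>2\<close>
  is an affine function \<open>A - B t\<close> of \<open>t\<close>, positive on the integration range.\<close>

lemma Ifun_3:
  assumes b: "b > 0" and r: "-1 < r" "r < 1"
  shows "Ifun b 3 r = 2 / pi * (1 - r\<^sup>2) * sqrt (1 - r\<^sup>2) * (b / ((1 + b\<^sup>2) * (b\<^sup>2 - 2 * r * b + 1)))"
proof -
  define s where "s = sqrt (1 - r\<^sup>2)"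
  define q where "q = sqrt (3::real)"
  have "r\<^sup>2 < 1" using r by (simp add: abs_square_less_1)
  then have s0: "s > 0" and ss: "s\<^sup>2 = 1 - r\<^sup>2" unfolding s_def by simp_all
  have q0: "q > 0" and qq: "q\<^sup>2 = 3" unfolding q_def by simp_all
  have s_nz: "s \<noteq> 0" using s0 by simp
  define tm where "tm = - q * r / s"
  define tp where "tp = q * (b - r) / s"
  define A where "A = 3 * (b\<^sup>2 + 1 - 2 * r\<^sup>2) / s\<^sup>2"
  define B where "B = 2 * q * r / s"
  define c where "c = 18 / (pi * q)"
  have t_minus: "t_minus 3 r = tm" and t_plus: "t_plus b 3 r = tp"
    unfolding t_minus_def tm_def t_plus_def tp_def q_def s_def by simp_all
  have width: "tp - tm = q * b / s" unfolding tp_def tm_def using s0 by (simp add: field_simps)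
  have "q * b / s > 0" using q0 s0 b by simp
  with width have tm_tp: "tm < tp" by simp
  have affine: "(tp - tm)\<^sup>2 - (t - tm)\<^sup>2 + 3 + t\<^sup>2 = A - B * t" for t
    unfolding tp_def tm_def A_def B_def using s_nz qq ss by (simp add: field_simps power2_eq_square; algebra)
  have A_tm: "A - B * tm = 3 * (1 + b\<^sup>2) / s\<^sup>2"
    unfolding tm_def A_def B_def using s_nz qq ss by (simp add: field_simps power2_eq_square; algebra)
  have A_tp: "A - B * tp = 3 * (b\<^sup>2 - 2 * r * b + 1) / s\<^sup>2"
    unfolding tp_def A_def B_def using s_nz qq ss by (simp add: field_simps power2_eq_square; algebra)
  have pos: "A - B * t > 0" if "tm \<le> t" "t \<le> tp" for t
  proof -
    have "(t - tm)\<^sup>2 \<le> (tp - tm)\<^sup>2" using that by (simp add: power_mono)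
    moreover have "3 + t\<^sup>2 > 0" by (simp add: add_pos_nonneg)
    ultimately show ?thesis using affine[of t] by linarith
  qed
  have integrand: "student_t_density 3 t * F_cdf 4 2 (Fstat t b 3 r) = c / (A - B * t)\<^sup>2"
    if "tm \<le> t" "t < tp" for t
  proof -
    define d where "d = (tp - tm)\<^sup>2 - (t - tm)\<^sup>2"
    have d: "d > 0" unfolding d_def using that by (simp add: power_strict_mono)
    have "Fstat t b 3 r = (3 + t\<^sup>2) / (2 * d)"
      unfolding Fstat_def t_minus t_plus d_def by (simp add: field_simps)
    moreover have "d + (3 + t\<^sup>2) = A - B * t" using affine[of t] unfolding d_def by simp
    ultimately show ?thesis
      using student_t_3_times_F_cdf[OF d] unfolding c_def q_def by simp
  qed
  have "Ifun b 3 r = (LBINT t:{tm..tp}. student_t_density 3 t * F_cdf 4 2 (Fstat t b 3 r))"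
    unfolding Ifun_def t_minus t_plus by simp
  also have "\<dots> = (LBINT t:{tm..tp}. c / (A - B * t)\<^sup>2)"
    using tm_tp pos integrand
    by (intro set_integral_cong_except_right_end integral_inverse_square_affine(1)) auto
  also have "\<dots> = c * (tp - tm) / ((A - B * tm) * (A - B * tp))"
    using tm_tp pos by (intro integral_inverse_square_affine(2)) auto
  also have "\<dots> = 2 / pi * s\<^sup>2 * s * (b / ((1 + b\<^sup>2) * (b\<^sup>2 - 2 * r * b + 1)))"
  proof -
    have "X \<noteq> 0 \<Longrightarrow> Y \<noteq> 0 \<Longrightarrow>
        18 / (pi * q) * (q * b / s) / ((3 * X / s\<^sup>2) * (3 * Y / s\<^sup>2)) = 2 / pi * s\<^sup>2 * s * (b / (X * Y))"
      for X Y using s0 q0 by (simp add: field_simps power2_eq_square)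
    moreover have "1 + b\<^sup>2 \<noteq> 0" using zero_le_power2[of b] by linarith
    moreover have "b\<^sup>2 - 2 * r * b + 1 \<noteq> 0" using quadratic_pos[OF r, of b] by linarith
    ultimately show ?thesis unfolding width A_tm A_tp c_def by blast
  qed
  finally show ?thesis using ss unfolding s_def by simp
qed

text \<open>The two terms \<open>I(a,3,\<rho>)\<close> and \<open>I(1/a,3,\<rho>)\<close> of \<open>J\<close> differ by the factor \<open>a\<^sup>2\<close>,
  so their sum cancels the factor \<open>1 + a\<^sup>2\<close>.\<close>

lemma Ifun_3_reciprocal_sum:
  assumes a: "a > 0" and \<rho>: "-1 < \<rho>" "\<rho> < 1"
  shows "Ifun a 3 \<rho> + Ifun (1/a) 3 \<rho> = 2 / pi * (1 - \<rho>\<^sup>2) * sqrt (1 - \<rho>\<^sup>2) * (a / (a\<^sup>2 - 2 * \<rho> * a + 1))"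
proof -
  define k where "k = 2 / pi * (1 - \<rho>\<^sup>2) * sqrt (1 - \<rho>\<^sup>2)"
  define Q where "Q = a\<^sup>2 - 2 * \<rho> * a + 1"
  have X: "1 + a\<^sup>2 > 0" by (simp add: add_pos_nonneg)
  have "Ifun (1/a) 3 \<rho> = k * ((1/a) / ((1 + (1/a)\<^sup>2) * ((1/a)\<^sup>2 - 2 * \<rho> * (1/a) + 1)))"
    using Ifun_3[of "1/a", OF _ \<rho>] a unfolding k_def by simp
  also have "(1/a) / ((1 + (1/a)\<^sup>2) * ((1/a)\<^sup>2 - 2 * \<rho> * (1/a) + 1)) = a ^ 3 / ((1 + a\<^sup>2) * Q)"
    using a unfolding Q_def by (simp add: field_simps power2_eq_square power3_eq_cube)
  finally have "Ifun a 3 \<rho> + Ifun (1/a) 3 \<rho> = k * (a / ((1 + a\<^sup>2) * Q) + a ^ 3 / ((1 + a\<^sup>2) * Q))"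
    using Ifun_3[OF a \<rho>] unfolding k_def Q_def by (simp add: distrib_left)
  also have "a / ((1 + a\<^sup>2) * Q) + a ^ 3 / ((1 + a\<^sup>2) * Q) = (a * (1 + a\<^sup>2)) / ((1 + a\<^sup>2) * Q)"
    by (simp add: add_divide_distrib[symmetric] algebra_simps power2_eq_square power3_eq_cube)
  also have "\<dots> = a / Q" using X by simp
  finally show ?thesis unfolding k_def Q_def .
qed

text \<open>For \<open>b = 0\<close> (with the convention \<open>1/0 = 0\<close>) both terms of \<open>J\<close> integrate over a
  single point, so \<open>J\<close> vanishes as the closed form does.\<close>

lemma Jfun_3:
  assumes r: "-1 < r" "r < 1"
  shows "Jfun b 3 r 1 = 2 / pi * (1 - r\<^sup>2) * sqrt (1 - r\<^sup>2) * (\<bar>b\<bar> / (b\<^sup>2 - 2 * r * b + 1))"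
proof (cases "b = 0")
  case True
  have "Ifun 0 3 0 = 0" unfolding Ifun_def t_minus_def t_plus_def set_lebesgue_integral_def
    by (rule integral_eq_zero_AE) (use AE_lborel_singleton[of 0] in \<open>auto elim!: eventually_mono\<close>)
  then show ?thesis unfolding Jfun_def True by simp
next
  case False
  define \<rho> where "\<rho> = r * sgn b"
  have \<rho>: "-1 < \<rho>" "\<rho> < 1" unfolding \<rho>_def using r False by (auto simp: sgn_if)
  have "\<rho>\<^sup>2 = r\<^sup>2" and "\<rho> * \<bar>b\<bar> = r * b" unfolding \<rho>_def using False by (simp_all add: sgn_if)
  moreover have "Jfun b 3 r 1 = Ifun \<bar>b\<bar> 3 \<rho> + Ifun (1/\<bar>b\<bar>) 3 \<rho>"
    unfolding Jfun_def \<rho>_def by simp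
  ultimately show ?thesis
    using Ifun_3_reciprocal_sum[of "\<bar>b\<bar>", OF _ \<rho>] False by (simp add: mult.assoc)
qed

section \<open>The normalising integral\<close>

lemma integral_abs_by_antiderivative:
  fixes g G :: "real \<Rightarrow> real"
  assumes G: "\<And>x. (G has_real_derivative g x) (at x)" and g_cont: "\<And>x. isCont g x"
    and g_pos: "\<And>x. x > 0 \<Longrightarrow> g x \<ge> 0" and g_neg: "\<And>x. x < 0 \<Longrightarrow> g x \<le> 0"
    and g0: "g 0 = 0"
    and G_top: "(G \<longlongrightarrow> G_top) at_top" and G_bot: "(G \<longlongrightarrow> G_bot) at_bot"
  shows "(LINT x|lborel. \<bar>g x\<bar>) = G_top + G_bot - 2 * G 0"
proof -
  have G_right: "(G \<longlongrightarrow> G 0) (at_right 0)" and G_left: "(G \<longlongrightarrow> G 0) (at_left 0)"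
    using DERIV_isCont[OF G, of 0] by (auto simp: isCont_def filterlim_at_split)
  have abs_cont: "isCont (\<lambda>x. \<bar>g x\<bar>) x" for x using g_cont[of x] by (intro continuous_intros)
  have right_deriv: "(G has_real_derivative \<bar>g x\<bar>) (at x)"
    if "0 < ereal x" "ereal x < \<infinity>" for x
    using that G[of x] g_pos[of x] by (simp add: zero_ereal_def)
  have left_deriv: "((\<lambda>x. - G x) has_real_derivative \<bar>g x\<bar>) (at x)"
    if "-\<infinity> < ereal x" "ereal x < 0" for x
    using that DERIV_minus[OF G[of x]] g_neg[of x] by (simp add: zero_ereal_def)
  have right_limits: "((G \<circ> real_of_ereal) \<longlongrightarrow> G 0) (at_right 0)"
      "((G \<circ> real_of_ereal) \<longlongrightarrow> G_top) (at_left \<infinity>)"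
    using G_right G_top by (auto simp: zero_ereal_def ereal_tendsto_simps)
  have left_limits: "(((\<lambda>x. - G x) \<circ> real_of_ereal) \<longlongrightarrow> - G_bot) (at_right (-\<infinity>))"
      "(((\<lambda>x. - G x) \<circ> real_of_ereal) \<longlongrightarrow> - G 0) (at_left 0)"
    using tendsto_minus[OF G_bot] tendsto_minus[OF G_left]
    by (auto simp: zero_ereal_def ereal_tendsto_simps)
  have right: "set_integrable lborel (einterval 0 \<infinity>) (\<lambda>x. \<bar>g x\<bar>)
      \<and> (LBINT x=0..\<infinity>. \<bar>g x\<bar>) = G_top - G 0"
    by (intro conjI interval_integral_FTC_nonneg[where F = G and A = "G 0" and B = G_top])
      (use right_limits in \<open>auto intro: right_deriv abs_cont\<close>)
  have left: "set_integrable lborel (einterval (-\<infinity>) 0) (\<lambda>x. \<bar>g x\<bar>)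
      \<and> (LBINT x=-\<infinity>..0. \<bar>g x\<bar>) = - G 0 - - G_bot"
    by (intro conjI interval_integral_FTC_nonneg[where F = "\<lambda>x. - G x" and A = "- G_bot" and B = "- G 0"])
      (use left_limits in \<open>auto intro: left_deriv abs_cont\<close>)
  have pos_einterval: "einterval 0 \<infinity> = {0<..}" and neg_einterval: "einterval (-\<infinity>) 0 = {..<0}"
    by (simp_all add: zero_ereal_def)
  have int_pos: "integrable lborel (\<lambda>x. indicator {0<..} x *\<^sub>R \<bar>g x\<bar>)"
      "(LINT x|lborel. indicator {0<..} x *\<^sub>R \<bar>g x\<bar>) = G_top - G 0"
    using right unfolding pos_einterval set_integrable_def interval_lebesgue_integral_def
      set_lebesgue_integral_def by (auto simp: zero_ereal_def)
  have int_neg: "integrable lborel (\<lambda>x. indicator {..<0} x *\<^sub>R \<bar>g x\<bar>)"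
      "(LINT x|lborel. indicator {..<0} x *\<^sub>R \<bar>g x\<bar>) = G_bot - G 0"
    using left unfolding neg_einterval set_integrable_def interval_lebesgue_integral_def
      set_lebesgue_integral_def by (auto simp: zero_ereal_def)
  have "\<bar>g x\<bar> = indicator {0<..} x *\<^sub>R \<bar>g x\<bar> + indicator {..<0} x *\<^sub>R \<bar>g x\<bar>" for x
    using g0 by (cases x "0::real" rule: linorder_cases) (auto simp: indicator_def)
  then have "(LINT x|lborel. \<bar>g x\<bar>)
      = (LINT x|lborel. indicator {0<..} x *\<^sub>R \<bar>g x\<bar> + indicator {..<0} x *\<^sub>R \<bar>g x\<bar>)"
    by presburger
  also have "\<dots> = G_top - G 0 + (G_bot - G 0)" using int_pos int_neg by simp
  finally show ?thesis by simp
qed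

text \<open>An antiderivative of the signed posterior kernel \<open>x / ((1 + x\<^sup>2)(x\<^sup>2 - 2 r x + 1))\<close>
  for \<open>r \<noteq> 0\<close>, from the partial fraction decomposition
  \<open>2 r x / ((1 + x\<^sup>2) Q) = 1 / Q - 1 / (1 + x\<^sup>2)\<close>.\<close>

lemma posterior_kernel_antiderivative:
  fixes r x :: real
  assumes r: "-1 < r" "r < 1" "r \<noteq> 0"
  defines "s \<equiv> sqrt (1 - r\<^sup>2)"
  shows "((\<lambda>x. (arctan ((x - r) / s) / s - arctan x) / (2 * r)) has_real_derivative
      x / ((1 + x\<^sup>2) * (x\<^sup>2 - 2 * r * x + 1))) (at x)"
proof -
  define Q where "Q = x\<^sup>2 - 2 * r * x + 1"
  have Q: "Q > 0" unfolding Q_def using quadratic_pos[OF r(1,2)] .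
  have X: "1 + x\<^sup>2 > 0" by (simp add: add_pos_nonneg)
  have "r\<^sup>2 < 1" using r by (simp add: abs_square_less_1)
  then have s0: "s > 0" and ss: "s\<^sup>2 = 1 - r\<^sup>2" unfolding s_def by simp_all
  have "1 + ((x - r) / s)\<^sup>2 = Q / s\<^sup>2"
    unfolding Q_def using s0 ss by (simp add: field_simps power2_eq_square; algebra)
  then have shifted: "inverse (1 + ((x - r) / s)\<^sup>2) * (1 / s) / s = 1 / Q"
    using s0 Q by (simp add: field_simps power2_eq_square)
  have "((\<lambda>x. (arctan ((x - r) / s) / s - arctan x) / (2 * r)) has_real_derivative
      (inverse (1 + ((x - r) / s)\<^sup>2) * (1 / s) / s - inverse (1 + x\<^sup>2)) / (2 * r)) (at x)"
  proof (intro DERIV_cdivide DERIV_diff DERIV_arctan)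
    show "((\<lambda>x. arctan ((x - r) / s)) has_real_derivative inverse (1 + ((x - r) / s)\<^sup>2) * (1 / s)) (at x)"
      by (rule DERIV_chain2[OF DERIV_arctan]) (use s0 in \<open>auto intro!: derivative_eq_intros\<close>)
  qed
  also have "(inverse (1 + ((x - r) / s)\<^sup>2) * (1 / s) / s - inverse (1 + x\<^sup>2)) / (2 * r)
      = x / ((1 + x\<^sup>2) * Q)"
  proof -
    have "1 / Q - inverse (1 + x\<^sup>2) = (1 + x\<^sup>2 - Q) / (Q * (1 + x\<^sup>2))"
      using Q X by (simp add: field_simps)
    also have "1 + x\<^sup>2 - Q = 2 * r * x" unfolding Q_def by simp
    finally show ?thesis unfolding shifted using r(3) by (simp add: mult.commute)
  qed
  finally show ?thesis unfolding Q_def .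
qed

lemma integral_posterior_kernel:
  fixes r :: real
  assumes r: "-1 < r" "r < 1"
  shows "(LINT x|lborel. \<bar>x\<bar> / ((1 + x\<^sup>2) * (x\<^sup>2 - 2 * r * x + 1)))
    = (if r = 0 then 1 else arcsin r / (r * sqrt (1 - r\<^sup>2)))"
proof -
  define g where "g x = x / ((1 + x\<^sup>2) * (x\<^sup>2 - 2 * r * x + 1))" for x
  have X: "1 + x\<^sup>2 > 0" for x :: real by (simp add: add_pos_nonneg)
  have den: "(1 + x\<^sup>2) * (x\<^sup>2 - 2 * r * x + 1) > 0" for x
    using X[of x] quadratic_pos[OF r, of x] by simp
  have abs_g: "\<bar>x\<bar> / ((1 + x\<^sup>2) * (x\<^sup>2 - 2 * r * x + 1)) = \<bar>g x\<bar>" for x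
    unfolding g_def using den[of x] by (simp add: abs_divide)
  have g_cont: "isCont g x" for x
    unfolding g_def using X[of x] quadratic_pos[OF r, of x] by (intro continuous_intros) simp
  have g_pos: "g x \<ge> 0" if "x > 0" for x unfolding g_def using that den[of x] by simp
  have g_neg: "g x \<le> 0" if "x < 0" for x
    unfolding g_def using that den[of x] by (simp add: divide_nonpos_pos)
  have g0: "g 0 = 0" unfolding g_def by simp
  show ?thesis
  proof (cases "r = 0")
    case True
    define G where "G x = - 1 / (2 * (1 + x\<^sup>2))" for x :: real
    have "(G has_real_derivative g x) (at x)" for x
    proof -
      have X_nz: "1 + x\<^sup>2 \<noteq> 0" using X[of x] by simp
      have "(G has_real_derivative - (- 1 * (2 * (2 * x))) / (2 * (1 + x\<^sup>2) * (2 * (1 + x\<^sup>2)))) (at x)"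
        unfolding G_def using X_nz by (intro derivative_eq_intros DERIV_divide) (auto simp: power2_eq_square)
      moreover have "- (- 1 * (2 * (2 * x))) / (2 * Y * (2 * Y)) = x / (Y * Y)" if "Y \<noteq> 0" for Y :: real
        using that by (simp add: field_simps)
      ultimately have "(G has_real_derivative x / ((1 + x\<^sup>2) * (1 + x\<^sup>2))) (at x)"
        using X_nz by metis
      then show ?thesis unfolding g_def True by (simp add: add.commute)
    qed
    moreover have "(G \<longlongrightarrow> 0) at_top" and "(G \<longlongrightarrow> 0) at_bot"
      unfolding G_def by real_asymp+
    ultimately have "(LINT x|lborel. \<bar>g x\<bar>) = 0 + 0 - 2 * G 0"
      using g_cont g_pos g_neg g0 by (intro integral_abs_by_antiderivative)
    then show ?thesis unfolding abs_g using True by (simp add: G_def)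
  next
    case False
    define s where "s = sqrt (1 - r\<^sup>2)"
    have "r\<^sup>2 < 1" using r by (simp add: abs_square_less_1)
    then have s0: "s > 0" unfolding s_def by simp
    define G where "G x = (arctan ((x - r) / s) / s - arctan x) / (2 * r)" for x
    have deriv: "(G has_real_derivative g x) (at x)" for x
      unfolding G_def g_def s_def using posterior_kernel_antiderivative[OF r False] .
    have top: "((\<lambda>x. arctan ((x - r) / s)) \<longlongrightarrow> pi / 2) at_top"
      and bot: "((\<lambda>x. arctan ((x - r) / s)) \<longlongrightarrow> - (pi / 2)) at_bot"
      using s0 by real_asymp+
    have G_top: "(G \<longlongrightarrow> (pi / 2 / s - pi / 2) / (2 * r)) at_top"
      unfolding G_def using s0 False
      by (intro tendsto_divide tendsto_diff top tendsto_const tendsto_arctan_at_top) auto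
    have G_bot: "(G \<longlongrightarrow> (- (pi / 2) / s - - (pi / 2)) / (2 * r)) at_bot"
      unfolding G_def using s0 False
      by (intro tendsto_divide tendsto_diff bot tendsto_const tendsto_arctan_at_bot) auto
    have G0: "G 0 = - arcsin r / (2 * r * s)"
      unfolding G_def s_def using arcsin_arctan[OF r] by (simp add: arctan_minus)
    have "(LINT x|lborel. \<bar>g x\<bar>)
        = (pi / 2 / s - pi / 2) / (2 * r) + (- (pi / 2) / s - - (pi / 2)) / (2 * r) - 2 * G 0"
      using deriv g_cont g_pos g_neg g0 G_top G_bot by (rule integral_abs_by_antiderivative)
    also have "\<dots> = arcsin r / (r * s)"
      unfolding G0 using s0 False by (simp add: field_simps)
    finally show ?thesis unfolding abs_g s_def using False by simp
  qed
qed

section \<open>The hypergeometric function \<open>\<^sub>2F\<^sub>1(1,1;3/2;z)\<close>\<close>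

definition hg_coeff :: "nat \<Rightarrow> real" where
  "hg_coeff n = pochhammer 1 n * pochhammer 1 n / (pochhammer (3/2) n * fact n)"

lemma hyp2F1_1_1_3_2: "hyp2F1 1 1 (3/2) z = (\<Sum>n. hg_coeff n * z ^ n)"
  unfolding hyp2F1_def hg_coeff_def ..

lemma hg_coeff_0: "hg_coeff 0 = 1"
  unfolding hg_coeff_def by simp

text \<open>Since \<open>(1)\<^sub>n = n!\<close>, consecutive coefficients have ratio \<open>(n + 1) / (n + 3/2)\<close>.\<close>

lemma hg_coeff_Suc: "hg_coeff (Suc n) = hg_coeff n * ((real n + 1) / (real n + 3/2))"
proof -
  have fact_form: "hg_coeff m = fact m / pochhammer (3/2) m" for m
    unfolding hg_coeff_def pochhammer_fact[symmetric] by simp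
  have "pochhammer (3/2::real) n > 0" by (rule pochhammer_pos) simp
  then show ?thesis unfolding fact_form pochhammer_Suc fact_Suc by (simp add: field_simps)
qed

lemma hg_coeff_recursion: "(2 * real n + 3) * hg_coeff (Suc n) = (2 * real n + 2) * hg_coeff n"
  unfolding hg_coeff_Suc by (simp add: field_simps)

lemma hg_coeff_bounds: "0 \<le> hg_coeff n \<and> hg_coeff n \<le> 1"
proof (induction n)
  case 0
  then show ?case by (simp add: hg_coeff_0)
next
  case (Suc n)
  have "0 \<le> (real n + 1) / (real n + 3/2)" and "(real n + 1) / (real n + 3/2) \<le> 1"
    by simp_all
  with Suc have "0 \<le> hg_coeff n * ((real n + 1) / (real n + 3/2))"
    and "hg_coeff n * ((real n + 1) / (real n + 3/2)) \<le> 1 * 1"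
    by (simp, intro mult_mono) auto
  then show ?case unfolding hg_coeff_Suc by simp
qed

lemma hg_summable: "norm (z::real) < 1 \<Longrightarrow> summable (\<lambda>n. hg_coeff n * z ^ n)"
  by (rule summable_comparison_test'[of "\<lambda>n. \<bar>z\<bar> ^ n"])
    (use hg_coeff_bounds in \<open>auto simp: summable_geometric abs_mult power_abs mult_left_le_one_le\<close>)

definition hg_deriv :: "real \<Rightarrow> real" where
  "hg_deriv z = (\<Sum>n. diffs hg_coeff n * z ^ n)"

lemma hyp2F1_1_1_3_2_deriv:
  "norm z < 1 \<Longrightarrow> ((\<lambda>z. hyp2F1 1 1 (3/2) z) has_real_derivative hg_deriv z) (at z)"
  unfolding hyp2F1_1_1_3_2 hg_deriv_def
  by (rule termdiffs_strong'[where K = 1]) (auto intro: hg_summable)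

text \<open>The coefficient recursion translates into the differential equation
  \<open>(1 - 2z) F + 2z(1 - z) F' = 1\<close>: with \<open>S = \<Sum> (2n + 1) c\<^sub>n z\<^sup>n = F + 2 z F'\<close>, shifting the
  series by one index gives \<open>S = 1 + z (S + F)\<close>.\<close>

lemma hyp2F1_1_1_3_2_ode:
  assumes z: "norm (z::real) < 1"
  shows "(1 - 2 * z) * hyp2F1 1 1 (3/2) z + 2 * z * (1 - z) * hg_deriv z = 1"
proof -
  define F where "F = hyp2F1 1 1 (3/2) z"
  define c where "c n = (2 * real n + 1) * hg_coeff n" for n
  have sum_F: "summable (\<lambda>n. hg_coeff n * z ^ n)" using hg_summable[OF z] .
  have sum_D: "summable (\<lambda>n. diffs hg_coeff n * z ^ n)"
    by (rule termdiff_converges[where K = 1]) (use z hg_summable in auto)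
  have sum_nc: "summable (\<lambda>n. (real n * hg_coeff n) * z ^ n)"
    and nc: "(\<Sum>n. (real n * hg_coeff n) * z ^ n) = z * hg_deriv z"
  proof -
    have shift: "real (Suc n) * hg_coeff (Suc n) = diffs hg_coeff n" for n
      unfolding diffs_def by simp
    show "summable (\<lambda>n. (real n * hg_coeff n) * z ^ n)"
      using sum_D unfolding shift[symmetric] by (subst (asm) summable_powser_split_head)
    from powser_split_head(1)[OF this]
    show "(\<Sum>n. (real n * hg_coeff n) * z ^ n) = z * hg_deriv z"
      unfolding hg_deriv_def shift by simp
  qed
  have c_sums: "(\<lambda>n. c n * z ^ n) sums (F + 2 * (z * hg_deriv z))"
  proof -
    have "(\<lambda>n. hg_coeff n * z ^ n + 2 * ((real n * hg_coeff n) * z ^ n)) sums (F + 2 * (z * hg_deriv z))"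
      unfolding F_def hyp2F1_1_1_3_2 nc[symmetric]
      by (intro sums_add sums_mult summable_sums sum_F sum_nc)
    then show ?thesis unfolding c_def by (simp add: algebra_simps)
  qed
  have c_shift: "c (Suc n) = (2 * real n + 2) * hg_coeff n" for n
    unfolding c_def using hg_coeff_recursion[of n] by (simp add: algebra_simps)
  have "(\<lambda>n. c (Suc n) * z ^ n) sums (2 * (z * hg_deriv z) + 2 * F)"
  proof -
    have "(\<lambda>n. 2 * ((real n * hg_coeff n) * z ^ n) + 2 * (hg_coeff n * z ^ n)) sums (2 * (z * hg_deriv z) + 2 * F)"
      unfolding F_def hyp2F1_1_1_3_2 nc[symmetric]
      by (intro sums_add sums_mult summable_sums sum_F sum_nc)
    then show ?thesis unfolding c_shift by (simp add: algebra_simps)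
  qed
  moreover have "(\<Sum>n. c n * z ^ n) = c 0 + (\<Sum>n. c (Suc n) * z ^ n) * z"
    using powser_split_head(1)[OF sums_summable[OF c_sums]] .
  ultimately have "F + 2 * (z * hg_deriv z) = 1 + (2 * (z * hg_deriv z) + 2 * F) * z"
    using c_sums hg_coeff_0 unfolding c_def by (simp add: sums_iff)
  then show ?thesis unfolding F_def by algebra
qed

text \<open>By the differential equation, \<open>x \<surd>(1 - x\<^sup>2) F(x\<^sup>2)\<close> has the derivative of \<open>arcsin\<close>.\<close>

lemma arcsin_series_deriv:
  assumes y: "-1 < y" "y < 1"
  shows "((\<lambda>x. x * sqrt (1 - x\<^sup>2) * hyp2F1 1 1 (3/2) (x\<^sup>2)) has_real_derivative inverse (sqrt (1 - y\<^sup>2))) (at y)"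
proof -
  define F where "F = hyp2F1 1 1 (3/2)"
  define w where "w = sqrt (1 - y\<^sup>2)"
  have yy: "y\<^sup>2 < 1" using y by (simp add: abs_square_less_1)
  then have w0: "w > 0" and ww: "w\<^sup>2 = 1 - y\<^sup>2" unfolding w_def by simp_all
  have "((\<lambda>x. 1 - x\<^sup>2) has_real_derivative - (2 * y)) (at y)"
    by (auto intro!: derivative_eq_intros)
  from DERIV_chain2[OF DERIV_real_sqrt this]
  have d_root: "((\<lambda>x. sqrt (1 - x\<^sup>2)) has_real_derivative inverse w / 2 * - (2 * y)) (at y)"
    using yy unfolding w_def by simp
  have "((\<lambda>x. x\<^sup>2) has_real_derivative 2 * y) (at y)"
    by (auto intro!: derivative_eq_intros)
  from DERIV_chain2[OF hyp2F1_1_1_3_2_deriv this]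
  have d_series: "((\<lambda>x. F (x\<^sup>2)) has_real_derivative hg_deriv (y\<^sup>2) * (2 * y)) (at y)"
    using yy unfolding F_def by simp
  have "((\<lambda>x. x * sqrt (1 - x\<^sup>2) * F (x\<^sup>2)) has_real_derivative
      y * w * (hg_deriv (y\<^sup>2) * (2 * y)) + (y * (inverse w / 2 * - (2 * y)) + 1 * w) * F (y\<^sup>2)) (at y)"
    using DERIV_mult'[OF DERIV_mult'[OF DERIV_ident d_root] d_series] unfolding w_def .
  also have "y * w * (hg_deriv (y\<^sup>2) * (2 * y)) + (y * (inverse w / 2 * - (2 * y)) + 1 * w) * F (y\<^sup>2)
      = ((1 - 2 * y\<^sup>2) * F (y\<^sup>2) + 2 * y\<^sup>2 * (1 - y\<^sup>2) * hg_deriv (y\<^sup>2)) / w"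
  proof -
    have "y * w * (hg_deriv (y\<^sup>2) * (2 * y)) + (y * (inverse w / 2 * - (2 * y)) + 1 * w) * F (y\<^sup>2)
        = (2 * y\<^sup>2 * w\<^sup>2 * hg_deriv (y\<^sup>2) + (w\<^sup>2 - y\<^sup>2) * F (y\<^sup>2)) / w"
      using w0 by (simp add: field_simps power2_eq_square)
    then show ?thesis unfolding ww by (simp add: algebra_simps)
  qed
  also have "(1 - 2 * y\<^sup>2) * F (y\<^sup>2) + 2 * y\<^sup>2 * (1 - y\<^sup>2) * hg_deriv (y\<^sup>2) = 1"
    unfolding F_def using yy by (intro hyp2F1_1_1_3_2_ode) simp
  finally show ?thesis unfolding F_def w_def by (simp add: inverse_eq_divide)
qed

text \<open>Both sides vanish at \<open>0\<close> and have the same derivative on \<open>(-1,1)\<close>.\<close>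

lemma arcsin_hyp2F1:
  assumes x: "-1 < x" "x < 1"
  shows "x * sqrt (1 - x\<^sup>2) * hyp2F1 1 1 (3/2) (x\<^sup>2) = arcsin x"
proof -
  define h where "h x = x * sqrt (1 - x\<^sup>2) * hyp2F1 1 1 (3/2) (x\<^sup>2) - arcsin x" for x
  have "(h has_real_derivative 0) (at y within ball 0 1)" if "y \<in> ball 0 1" for y
  proof -
    have y: "-1 < y" "y < 1" using that by (auto simp: dist_real_def)
    show ?thesis unfolding h_def
      using DERIV_diff[OF arcsin_series_deriv[OF y] DERIV_arcsin[OF y]]
      by (simp add: has_field_derivative_at_within)
  qed
  then obtain c where c: "\<And>x. x \<in> ball 0 1 \<Longrightarrow> h x = c"
    using has_field_derivative_zero_constant[OF convex_ball] by blast
  have "c = 0" using c[of 0] by (simp add: h_def)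
  moreover have "x \<in> ball 0 1" using x by (auto simp: dist_real_def)
  ultimately show ?thesis using c unfolding h_def by fastforce
qed

lemma hyp2F1_1_1_3_2_closed_form:
  assumes r: "-1 < r" "r < 1"
  shows "hyp2F1 1 1 (3/2) (r\<^sup>2) = (if r = 0 then 1 else arcsin r / (r * sqrt (1 - r\<^sup>2)))"
proof (cases "r = 0")
  case True
  then show ?thesis by (simp add: hyp2F1_1_1_3_2 powser_zero hg_coeff_0)
next
  case False
  have "sqrt (1 - r\<^sup>2) > 0" using r by (simp add: abs_square_less_1)
  with False arcsin_hyp2F1[OF r] show ?thesis by (simp add: field_simps)
qed

theorem mainTheorem7:
  fixes r :: real
  assumes "-1 < r" and "r < 1"
  shows "Kconst r = 1 / hyp2F1 1 1 (3/2) (r\<^sup>2)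
    \<and> (\<forall>b::real. b \<noteq> 0 \<longrightarrow>
         posterior_cauchy 3 r b = Kconst r * (1 / (1 + b\<^sup>2)) * (\<bar>b\<bar> / (b\<^sup>2 - 2 * r * b + 1)))"
proof -
  define N where "N = hyp2F1 1 1 (3/2) (r\<^sup>2)"
  have K: "Kconst r = 1 / N"
    unfolding N_def hyp2F1_1_1_3_2_closed_form[OF assms] Kconst_def by simp
  define k where "k = 2 / pi * (1 - r\<^sup>2) * sqrt (1 - r\<^sup>2)"
  have "r\<^sup>2 < 1" using assms by (simp add: abs_square_less_1)
  then have "k \<noteq> 0" unfolding k_def by simp
  define f where "f x = \<bar>x\<bar> / ((1 + x\<^sup>2) * (x\<^sup>2 - 2 * r * x + 1))" for x
  have unnormalised: "cauchy_density x * Jfun x 3 r 1 = k / pi * f x" for x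
    unfolding cauchy_density_def Jfun_3[OF assms] k_def[symmetric] f_def by (simp add: field_simps)
  have "(LINT x|lborel. f x) = N"
    unfolding f_def N_def hyp2F1_1_1_3_2_closed_form[OF assms]
    by (rule integral_posterior_kernel[OF assms])
  then have "posterior_cauchy 3 r b = f b / N" for b
    unfolding posterior_cauchy_def unnormalised using \<open>k \<noteq> 0\<close> by simp
  then show ?thesis unfolding K f_def N_def by simp
qed

end
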